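(* Let $\mathbb{F}$ be any field and let $C \subseteq \mathbb{F}^n$ be a subspace that is $\alpha$-non-overlapping for some $\alpha \ge 1$. Then every $M \in C \otimes C$ of rank at least $2$ satisfies $\|M\|_0 \ge \alpha \cdot d(C)^2$.
   Context: $\|\cdot\|_0$ counts nonzero entries. For a subspace $C \ne \{0\}$, $d(C) := \min_{u \in C\setminus\{0\}}\|u\|_0$ is its minimum distance. For subspaces $U \subseteq \mathbb{F}^n$, $V \subseteq \mathbb{F}^m$, $U \otimes V$ is the space of matrices $M \in \mathbb{F}^{n\times m}$ all of whose columns lie in $U$ and all of whose rows lie in $V$. A subspace $C\subseteq \mathbb{F}^n$ is $\alpha$-non-overlapping ($\alpha\ge 1$) if for any $u, v \in C$ linearly independent over $\mathbb{F}$, $|\mathrm{supp}(u)\cup\mathrm{supp}(v)| \ge \alpha \cdot d(C)$, where $\mathrm{supp}(u)$ is the set of nonzero coordinates of $u$. *)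

theory Defs
  imports "Jordan_Normal_Form.DL_Rank"
begin

definition supp_vec :: "'a::zero vec \<Rightarrow> nat set" where
  "supp_vec u = {i. i < dim_vec u \<and> u $ i \<noteq> 0}"

definition hw :: "'a::zero vec \<Rightarrow> nat" where
  "hw u = card (supp_vec u)"

definition hw_mat :: "'a::zero mat \<Rightarrow> nat" where
  "hw_mat M = card {(i, j). i < dim_row M \<and> j < dim_col M \<and> M $$ (i, j) \<noteq> 0}"

text \<open>Minimum distance of a subspace C of F^n (meaningful for C \<noteq> {0}).\<close>
definition min_dist :: "nat \<Rightarrow> 'a::zero vec set \<Rightarrow> nat" where
  "min_dist n C = Min {hw u | u. u \<in> C \<and> u \<noteq> 0\<^sub>v n}"

definition lin_indep2 :: "nat \<Rightarrow> 'a::field vec \<Rightarrow> 'a vec \<Rightarrow> bool" where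
  "lin_indep2 n u v \<longleftrightarrow> \<not> (\<exists>a b. (a, b) \<noteq> (0, 0) \<and> a \<cdot>\<^sub>v u + b \<cdot>\<^sub>v v = 0\<^sub>v n)"

definition non_overlapping :: "nat \<Rightarrow> real \<Rightarrow> 'a::field vec set \<Rightarrow> bool" where
  "non_overlapping n \<alpha> C \<longleftrightarrow> \<alpha> \<ge> 1 \<and>
     (\<forall>u\<in>C. \<forall>v\<in>C. lin_indep2 n u v \<longrightarrow>
        real (card (supp_vec u \<union> supp_vec v)) \<ge> \<alpha> * real (min_dist n C))"

definition tensor_code :: "nat \<Rightarrow> nat \<Rightarrow> 'a vec set \<Rightarrow> 'a vec set \<Rightarrow> 'a mat set" where
  "tensor_code n m U V = {M \<in> carrier_mat n m. (\<forall>j<m. col M j \<in> U) \<and> (\<forall>i<n. row M i \<in> V)}"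

end

theory Submission
  imports Defs
begin

text \<open>Rank at least 2 yields two linearly independent columns \<open>c\<^sub>1, c\<^sub>2 \<in> C\<close>, whose joint
  support \<open>S\<close> has at least \<open>\<alpha> d(C)\<close> elements. Every row indexed by \<open>S\<close> is nonzero (it meets
  \<open>c\<^sub>1\<close> or \<open>c\<^sub>2\<close>) and lies in \<open>C\<close>, so it has at least \<open>d(C)\<close> nonzero entries; summing over the
  rows in \<open>S\<close> gives \<open>\<parallel>M\<parallel>\<^sub>0 \<ge> \<alpha> d(C)\<^sup>2\<close>.\<close>

lemma smult_of_not_lin_indep2:
  fixes u v :: "'a::field vec"
  assumes u: "u \<in> carrier_vec n" "u \<noteq> 0\<^sub>v n" and v: "v \<in> carrier_vec n"
    and dep: "\<not> lin_indep2 n u v"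
  shows "\<exists>k. v = k \<cdot>\<^sub>v u"
proof -
  obtain a b where ab: "(a, b) \<noteq> (0, 0)" and comb: "a \<cdot>\<^sub>v u + b \<cdot>\<^sub>v v = 0\<^sub>v n"
    using dep unfolding lin_indep2_def by blast
  have comb_at: "a * u $ i + b * v $ i = 0" if "i < n" for i
    using arg_cong[OF comb, of "\<lambda>w. w $ i"] that u v by simp
  have "b \<noteq> 0"
  proof
    assume "b = 0"
    with ab have "a \<noteq> 0" by simp
    with \<open>b = 0\<close> comb_at have "u = 0\<^sub>v n" by (intro eq_vecI) (use u in auto)
    with u show False by simp
  qed
  have "v = (- a / b) \<cdot>\<^sub>v u"
    by (rule eq_vecI) (use comb_at \<open>b \<noteq> 0\<close> u v in \<open>auto simp: field_simps add_eq_0_iff\<close>)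
  then show ?thesis by blast
qed

lemma (in vec_space) rank_le_1_if_cols_multiples:
  assumes A: "A \<in> carrier_mat n nc" and c: "c \<in> carrier_vec n"
    and cols: "\<And>j. j < nc \<Longrightarrow> col A j = g j \<cdot>\<^sub>v c"
  shows "rank A \<le> 1"
proof (rule rank_le_1_product_entries[OF A])
  fix r j assume "r < dim_row A" "j < dim_col A"
  then show "A $$ (r, j) = c $ r * g j"
    using arg_cong[OF cols, of j "\<lambda>w. w $ r"] A c by (simp add: mult.commute)
qed

lemma lin_indep2_cols_if_rank_ge_2:
  fixes M :: "'a::field mat"
  assumes M: "M \<in> carrier_mat n nc" and rank: "vec_space.rank n M \<ge> 2"
  shows "\<exists>j1<nc. \<exists>j2<nc. lin_indep2 n (col M j1) (col M j2)"
proof (rule ccontr)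
  assume dep: "\<not> ?thesis"
  obtain c where c: "c \<in> carrier_vec n" and multiples: "\<And>j. j < nc \<Longrightarrow> \<exists>k. col M j = k \<cdot>\<^sub>v c"
  proof (cases "\<exists>j0<nc. col M j0 \<noteq> 0\<^sub>v n")
    case True
    then obtain j0 where j0: "j0 < nc" "col M j0 \<noteq> 0\<^sub>v n" by blast
    show ?thesis
    proof (rule that[of "col M j0"])
      fix j assume "j < nc"
      then show "\<exists>k. col M j = k \<cdot>\<^sub>v col M j0"
        using dep j0 M by (intro smult_of_not_lin_indep2) auto
    qed (use j0 M in auto)
  next
    case False
    show ?thesis
    proof (rule that[of "0\<^sub>v n"])
      fix j assume "j < nc"
      then have "col M j = 0 \<cdot>\<^sub>v 0\<^sub>v n" using False by auto
      then show "\<exists>k. col M j = k \<cdot>\<^sub>v 0\<^sub>v n" by blast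
    qed simp
  qed
  have "\<And>j. j < nc \<Longrightarrow> col M j = (SOME k. col M j = k \<cdot>\<^sub>v c) \<cdot>\<^sub>v c"
    using multiples by (rule someI_ex)
  then have "vec_space.rank n M \<le> 1"
    by (rule vec_space.rank_le_1_if_cols_multiples[OF M c])
  with rank show False by simp
qed

lemma hw_le_dim_vec: "hw u \<le> dim_vec u"
  unfolding hw_def supp_vec_def
  using card_mono[of "{..<dim_vec u}" "{i. i < dim_vec u \<and> u $ i \<noteq> 0}"] by auto

lemma min_dist_le_hw:
  assumes "C \<subseteq> carrier_vec n" "u \<in> C" "u \<noteq> 0\<^sub>v n"
  shows "min_dist n C \<le> hw u"
proof -
  have "hw v \<le> n" if "v \<in> C" for v
    using hw_le_dim_vec[of v] assms(1) that by auto
  then have "{hw u | u. u \<in> C \<and> u \<noteq> 0\<^sub>v n} \<subseteq> {..n}"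
    by auto
  then have "finite {hw u | u. u \<in> C \<and> u \<noteq> 0\<^sub>v n}"
    by (rule finite_subset) simp
  then show ?thesis
    unfolding min_dist_def using assms(2,3) by (intro Min_le) auto
qed

lemma sum_hw_rows_le_hw_mat:
  assumes "S \<subseteq> {..<dim_row M}"
  shows "(\<Sum>i\<in>S. hw (row M i)) \<le> hw_mat M"
proof -
  have fin: "finite S" using assms finite_subset by blast
  have "(\<Sum>i\<in>S. hw (row M i)) = card (Sigma S (\<lambda>i. supp_vec (row M i)))"
    unfolding hw_def by (rule card_SigmaI[symmetric]) (use fin in \<open>auto simp: supp_vec_def\<close>)
  also have "\<dots> \<le> hw_mat M"
    unfolding hw_mat_def
  proof (rule card_mono)
    show "finite {(i, j). i < dim_row M \<and> j < dim_col M \<and> M $$ (i, j) \<noteq> 0}"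
      by (rule finite_subset[of _ "{..<dim_row M} \<times> {..<dim_col M}"]) auto
    show "Sigma S (\<lambda>i. supp_vec (row M i))
        \<subseteq> {(i, j). i < dim_row M \<and> j < dim_col M \<and> M $$ (i, j) \<noteq> 0}"
      using assms by (auto simp: supp_vec_def)
  qed
  finally show ?thesis .
qed

lemma row_nonzero_if_in_supp_col:
  assumes "j < dim_col M" "i \<in> supp_vec (col M j)"
  shows "row M i \<noteq> 0\<^sub>v (dim_col M)"
proof
  assume "row M i = 0\<^sub>v (dim_col M)"
  then have "row M i $ j = 0" using assms(1) by simp
  with assms show False by (auto simp: supp_vec_def)
qed

lemma card_supp_cols_mult_min_dist_le_hw_mat:
  assumes M: "M \<in> carrier_mat n m" and C: "C \<subseteq> carrier_vec m"
    and rows: "\<And>i. i < n \<Longrightarrow> row M i \<in> C" and j: "j1 < m" "j2 < m"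
  shows "card (supp_vec (col M j1) \<union> supp_vec (col M j2)) * min_dist m C \<le> hw_mat M"
    (is "card ?S * _ \<le> _")
proof -
  have S: "?S \<subseteq> {..<n}" using M j by (auto simp: supp_vec_def)
  have "min_dist m C \<le> hw (row M i)" if "i \<in> ?S" for i
    using that S M j row_nonzero_if_in_supp_col[of j1 M i] row_nonzero_if_in_supp_col[of j2 M i]
    by (intro min_dist_le_hw[OF C] rows) auto
  then have "card ?S * min_dist m C \<le> (\<Sum>i\<in>?S. hw (row M i))"
    using sum_mono[of ?S "\<lambda>_. min_dist m C"] by simp
  also have "\<dots> \<le> hw_mat M" using S M by (intro sum_hw_rows_le_hw_mat) auto
  finally show ?thesis .
qed

theorem lemma2p5:
  fixes C :: "'a::field vec set" and n :: nat and \<alpha> :: real and M :: "'a mat"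
  assumes "VectorSpace.subspace class_ring C (module_vec TYPE('a) n)"
    and "non_overlapping n \<alpha> C"
    and "M \<in> tensor_code n n C C"
    and "vec_space.rank n M \<ge> 2"
  shows "real (hw_mat M) \<ge> \<alpha> * real (min_dist n C) ^ 2"
proof -
  have C: "C \<subseteq> carrier_vec n" using assms(1)
    unfolding VectorSpace.subspace_def submodule_def by (simp add: module_vec_def)
  have M: "M \<in> carrier_mat n n" and cols: "\<And>j. j < n \<Longrightarrow> col M j \<in> C"
    and rows: "\<And>i. i < n \<Longrightarrow> row M i \<in> C"
    using assms(3) unfolding tensor_code_def by auto
  obtain j1 j2 where j: "j1 < n" "j2 < n" and indep: "lin_indep2 n (col M j1) (col M j2)"
    using lin_indep2_cols_if_rank_ge_2[OF M assms(4)] by blast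
  define d where "d = min_dist n C"
  define S where "S = supp_vec (col M j1) \<union> supp_vec (col M j2)"
  have "\<alpha> * real d \<le> real (card S)"
    using assms(2) cols[OF j(1)] cols[OF j(2)] indep
    unfolding non_overlapping_def S_def d_def by blast
  moreover have "card S * d \<le> hw_mat M"
    unfolding S_def d_def by (rule card_supp_cols_mult_min_dist_le_hw_mat[OF M C rows j])
  ultimately have "(\<alpha> * real d) * real d \<le> real (card S) * real d"
    and "real (card S) * real d \<le> real (hw_mat M)"
    by (simp add: mult_right_mono, metis of_nat_le_iff of_nat_mult)
  then have "(\<alpha> * real d) * real d \<le> real (hw_mat M)" by linarith
  then show ?thesis unfolding d_def by (simp add: power2_eq_square)
qed

end
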